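(* Let $q=2$, and assume $A\cap B=\emptyset$, $|C|=m-1$ and $|A|\ge2$. Then the dual code $\mathcal C_{\overline{\mathcal N}_4}^\perp$ is a binary distance-optimal linear code with parameters $\left[2^{m+|A|+|B|}-2^{m+|B|},\ 2^{m+|A|+|B|}-2^{m+|B|}-m-2|A|-|B|,\ 4\right]$.
   Context: $\mathbb F_2$ is the binary field, $m\ge2$, $[m]=\{1,\dots,m\}$, $\mathrm{supp}(v)=\{i:v_i\ne0\}$. For nonempty $P\subseteq[m]$, $\Delta_P=\{v\in\mathbb F_2^m:\mathrm{supp}(v)\subseteq P\}$, $\Delta_P^c=\mathbb F_2^m\setminus\Delta_P$, $\Delta_P^*=\Delta_P\setminus\{\mathbf 0\}$. $A,B,C$ are nonempty subsets of $[m]$. Let $\mathcal N_4=\{(w_2+\omega,w_3,w_1)\in\mathbb F_2^{3m}: w_1\in\Delta_A^*,\ w_2\in\Delta_B,\ w_3\in\Delta_C^c,\ \omega\in\{\mathbf 0,w_1\}\}$, set $\overline{\mathcal N}_4=\mathcal N_4$ (over $\mathbb F_2$ each scalar class is a singleton), and let $\mathcal C_{\overline{\mathcal N}_4}$ be the binary linear code spanned by the rows of the $3m\times|\overline{\mathcal N}_4|$ matrix whose columns are the elements of $\overline{\mathcal N}_4$. $\mathcal C^\perp$ is the Euclidean dual. An $[n,k,d]$ code is distance-optimal if no linear $[n,k,d+1]$ code over the same field exists. *)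

theory Defs
  imports Main "HOL-Library.Z2" "HOL-Library.Function_Algebras"
begin

text \<open>Binary field: the type bit from HOL-Library.Z2 (a field with two elements).
Vectors of F_2^m are represented as functions nat => bit supported in {1..m}.\<close>

definition vecs :: "nat \<Rightarrow> (nat \<Rightarrow> bit) set" where
  "vecs m = {v. \<forall>i. v i \<noteq> 0 \<longrightarrow> i \<in> {1..m}}"

definition supp :: "(nat \<Rightarrow> bit) \<Rightarrow> nat set" where
  "supp v = {i. v i \<noteq> 0}"

definition Delta :: "nat \<Rightarrow> nat set \<Rightarrow> (nat \<Rightarrow> bit) set" where
  "Delta m P = {v \<in> vecs m. supp v \<subseteq> P}"

definition DeltaC :: "nat \<Rightarrow> nat set \<Rightarrow> (nat \<Rightarrow> bit) set" where
  "DeltaC m P = vecs m - Delta m P"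

definition DeltaS :: "nat \<Rightarrow> nat set \<Rightarrow> (nat \<Rightarrow> bit) set" where
  "DeltaS m P = Delta m P - {0}"

type_synonym col3 = "(nat \<Rightarrow> bit) \<times> (nat \<Rightarrow> bit) \<times> (nat \<Rightarrow> bit)"

definition N4 :: "nat \<Rightarrow> nat set \<Rightarrow> nat set \<Rightarrow> nat set \<Rightarrow> col3 set" where
  "N4 m A B C = {(w2 + \<omega>, w3, w1) | w1 w2 w3 \<omega>.
      w1 \<in> DeltaS m A \<and> w2 \<in> Delta m B \<and> w3 \<in> DeltaC m C \<and> \<omega> \<in> {0, w1}}"

definition ip3 :: "nat \<Rightarrow> col3 \<Rightarrow> col3 \<Rightarrow> bit" where
  "ip3 m x y = (\<Sum>i\<in>{1..m}. fst x i * fst y i + fst (snd x) i * fst (snd y) i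
                             + snd (snd x) i * snd (snd y) i)"

text \<open>Codes of length |I| are sets of words I -> F_2 (zero outside I).
The code spanned by the rows of the matrix whose columns are the elements of N:
its codewords are x^T G for x in F_2^{3m}.\<close>
definition col_code :: "nat \<Rightarrow> col3 set \<Rightarrow> (col3 \<Rightarrow> bit) set" where
  "col_code m N = {(\<lambda>c. if c \<in> N then ip3 m x c else 0) | x.
                    x \<in> vecs m \<times> vecs m \<times> vecs m}"

definition words :: "'i set \<Rightarrow> ('i \<Rightarrow> bit) set" where
  "words I = {y. \<forall>j. j \<notin> I \<longrightarrow> y j = 0}"

definition dual_code :: "'i set \<Rightarrow> ('i \<Rightarrow> bit) set \<Rightarrow> ('i \<Rightarrow> bit) set" where
  "dual_code I Cd = {y \<in> words I. \<forall>c\<in>Cd. (\<Sum>j\<in>I. y j * c j) = 0}"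

definition bin_linear_code :: "'i set \<Rightarrow> ('i \<Rightarrow> bit) set \<Rightarrow> bool" where
  "bin_linear_code I Cd \<longleftrightarrow> finite I \<and> Cd \<subseteq> words I \<and> 0 \<in> Cd \<and>
     (\<forall>x\<in>Cd. \<forall>y\<in>Cd. x + y \<in> Cd)"

text \<open>Dimension over F_2: existence of a basis with k elements (over F_2, linear
combinations are exactly subset sums).\<close>
definition code_dim :: "('i \<Rightarrow> bit) set \<Rightarrow> nat \<Rightarrow> bool" where
  "code_dim Cd k \<longleftrightarrow> (\<exists>Bs. finite Bs \<and> card Bs = k \<and> Bs \<subseteq> Cd \<and>
      (\<forall>S\<subseteq>Bs. sum id S = 0 \<longrightarrow> S = {}) \<and>
      (\<forall>c\<in>Cd. \<exists>S\<subseteq>Bs. c = sum id S))"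

definition wt :: "'i set \<Rightarrow> ('i \<Rightarrow> bit) \<Rightarrow> nat" where
  "wt I c = card {j\<in>I. c j \<noteq> 0}"

definition min_dist :: "'i set \<Rightarrow> ('i \<Rightarrow> bit) set \<Rightarrow> nat \<Rightarrow> bool" where
  "min_dist I Cd d \<longleftrightarrow> (\<exists>c\<in>Cd. c \<noteq> 0 \<and> wt I c = d) \<and> (\<forall>c\<in>Cd. c \<noteq> 0 \<longrightarrow> d \<le> wt I c)"

definition is_code_nkd :: "'i set \<Rightarrow> ('i \<Rightarrow> bit) set \<Rightarrow> nat \<Rightarrow> nat \<Rightarrow> nat \<Rightarrow> bool" where
  "is_code_nkd I Cd n k d \<longleftrightarrow> bin_linear_code I Cd \<and> card I = n \<and> code_dim Cd k \<and> min_dist I Cd d"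

text \<open>An [n,k,d] code is distance-optimal if no binary linear [n,k,d+1] code exists
(coordinates taken, w.l.o.g., as {0..<n}).\<close>
definition distance_optimal :: "nat \<Rightarrow> nat \<Rightarrow> nat \<Rightarrow> bool" where
  "distance_optimal n k d \<longleftrightarrow> \<not> (\<exists>Cd :: (nat \<Rightarrow> bit) set. is_code_nkd {..<n} Cd n k (d + 1))"

end

theory Submission
  imports Defs "HOL-Library.Product_Plus" "HOL-Library.Indicator_Function"
begin

(* The dual code is the kernel of the map sending y to the sum of the columns it selects, so
   its dimension is |N4| minus the dimension of the span of N4.  Writing C = [m] - {j}, the
   columns are triples (x, z, w) with z_j = 1, and they span Delta_(A u B) x F_2^m x Delta_A;
   producing the vectors (0, z, 0) is where two distinct points of A are needed.  As all
   columns are distinct and lie in the affine hyperplane z_j = 1, dual codewords have even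
   weight different from 2, and four explicit columns summing to 0 give d = 4.  For
   optimality, a binary [n, k, 5] code would have pairwise disjoint cosets w + Cd for the
   (n/2)^2 words w = e_i + e_l with i < n/2 <= l, forcing (n/2)^2 <= 2^(n-k); here
   2^(n-k) = 2^(m + 2|A| + |B|) is smaller. *)

(* Keep bit arithmetic in field form instead of unfolding it to XOR/AND. *)
declare add_bit_eq_xor [simp del] mult_bit_eq_and [simp del]

lemma bit_add_self [simp]: "(x::bit) + x = 0"
  by (cases x) simp_all

lemma bit_fun_add_self [simp]: "(f::'i \<Rightarrow> bit) + f = 0"
  by (simp add: fun_eq_iff)

lemma bit_fun_add_self_left [simp]: "(f::'i \<Rightarrow> bit) + (f + g) = g"
  by (simp flip: add.assoc)

lemma bit_add_eq_0_iff: "(x::bit) + y = 0 \<longleftrightarrow> x = y"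
  by (cases x; cases y) simp_all

lemma bit_add_eq_1_iff [simp]: "(x::bit) + y = 1 \<longleftrightarrow> (x = 1 \<longleftrightarrow> y = 0)"
  by (cases x; cases y) simp_all

lemma bit_fun_add_eq_0_iff: "(f::'i \<Rightarrow> bit) + g = 0 \<longleftrightarrow> f = g"
  by (simp add: fun_eq_iff bit_add_eq_0_iff)

lemma col3_add_self [simp]: "(c::col3) + c = 0"
  by (simp add: prod_eq_iff)

lemma col3_add_eq_0_iff: "(c::col3) + d = 0 \<longleftrightarrow> c = d"
  by (simp add: prod_eq_iff bit_fun_add_eq_0_iff)

lemma of_nat_bit_eq_0_iff: "(of_nat n :: bit) = 0 \<longleftrightarrow> even n"
  by (induct n) (auto simp: bit_add_eq_0_iff eq_commute[of 1])

lemma sum_mem_add_closed: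
  assumes "finite S" "0 \<in> G" "\<And>x y. x \<in> G \<Longrightarrow> y \<in> G \<Longrightarrow> x + y \<in> G"
    and "\<And>x. x \<in> S \<Longrightarrow> f x \<in> G"
  shows "sum f S \<in> G"
  using assms(1,4) by (induct S rule: finite_induct) (auto intro: assms(2,3))

lemma sum_fun_apply: "sum f S x = (\<Sum>a\<in>S. f a x)"
  by (induct S rule: infinite_finite_induct) auto

section \<open>Dimension of binary linear codes\<close>

lemma subset_sum_inj_on_Pow:
  fixes Bs :: "('i \<Rightarrow> bit) set"
  assumes "finite Bs" and indep: "\<forall>S\<subseteq>Bs. sum id S = 0 \<longrightarrow> S = {}"
  shows "inj_on (sum id) (Pow Bs)"
proof (rule inj_onI)
  fix S T assume S: "S \<in> Pow Bs" and T: "T \<in> Pow Bs" and eq: "sum id S = sum id T"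
  then have fin: "finite S" "finite T" using \<open>finite Bs\<close> by (meson PowD finite_subset)+
  have "sum id S = sum id (S \<inter> T) + sum id (S - T)" "sum id T = sum id (S \<inter> T) + sum id (T - S)"
    using sum.Int_Diff[OF fin(1), of id T] sum.Int_Diff[OF fin(2), of id S] by (simp_all only: Int_commute)
  with eq have "sum id (S \<inter> T) + sum id (S - T) = sum id (S \<inter> T) + sum id (T - S)" by (simp only:)
  then have eq': "sum id (S - T) = sum id (T - S)" by (simp only: add_left_cancel)
  have "sum id ((S - T) \<union> (T - S)) = sum id (S - T) + sum id (T - S)"
    by (rule sum.union_disjoint) (use fin in auto)
  also have "\<dots> = 0" by (simp only: eq' bit_fun_add_self)
  finally have "(S - T) \<union> (T - S) = {}" using S T indep by (meson PowD Diff_subset le_supI subset_trans)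
  then show "S = T" by blast
qed

lemma code_dim_imp_card:
  fixes Cd :: "('i \<Rightarrow> bit) set"
  assumes "code_dim Cd k" "0 \<in> Cd" "\<And>x y. x \<in> Cd \<Longrightarrow> y \<in> Cd \<Longrightarrow> x + y \<in> Cd"
  shows "card Cd = 2 ^ k"
proof -
  obtain Bs where Bs: "finite Bs" "card Bs = k" "Bs \<subseteq> Cd"
    and indep: "\<forall>S\<subseteq>Bs. sum id S = 0 \<longrightarrow> S = {}"
    and span: "\<forall>c\<in>Cd. \<exists>S\<subseteq>Bs. c = sum id S"
    using assms(1) unfolding code_dim_def by blast
  have "sum id ` Pow Bs = Cd"
  proof
    show "sum id ` Pow Bs \<subseteq> Cd"
      using Bs by (auto intro!: sum_mem_add_closed[OF _ assms(2,3)] intro: finite_subset)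
    show "Cd \<subseteq> sum id ` Pow Bs" using span by blast
  qed
  then have "card Cd = card (Pow Bs)"
    using card_image[OF subset_sum_inj_on_Pow[OF Bs(1) indep]] by simp
  then show ?thesis using Bs by (simp add: card_Pow)
qed

lemma subset_sum_indep_insert:
  fixes Bs :: "('i \<Rightarrow> bit) set"
  assumes fin: "finite Bs" and indep: "\<forall>S\<subseteq>Bs. sum id S = 0 \<longrightarrow> S = {}"
    and new: "\<forall>S\<subseteq>Bs. c \<noteq> sum id S"
  shows "\<forall>S\<subseteq>insert c Bs. sum id S = 0 \<longrightarrow> S = {}"
proof (intro allI impI)
  fix S assume S: "S \<subseteq> insert c Bs" "sum id S = 0"
  show "S = {}"
  proof (cases "c \<in> S")
    case True
    have "finite S" using S(1) fin finite_subset by blast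
    then have "c + sum id (S - {c}) = 0" using True S(2) by (simp add: sum.remove)
    then have "c = sum id (S - {c})" by (simp add: bit_fun_add_eq_0_iff)
    moreover have "S - {c} \<subseteq> Bs" using S(1) by blast
    ultimately show ?thesis using new by blast
  next
    case False
    then show ?thesis using S indep by blast
  qed
qed

lemma code_dimI_card:
  fixes Cd :: "('i \<Rightarrow> bit) set"
  assumes fin: "finite Cd" and zero: "0 \<in> Cd"
    and add: "\<And>x y. x \<in> Cd \<Longrightarrow> y \<in> Cd \<Longrightarrow> x + y \<in> Cd"
    and card: "card Cd = 2 ^ k"
  shows "code_dim Cd k"
proof -
  define Ind where "Ind = {Bs. Bs \<subseteq> Cd \<and> (\<forall>S\<subseteq>Bs. sum id S = 0 \<longrightarrow> S = {})}"
  have "finite Ind" using fin by (rule rev_finite_subset[OF finite_Pow_iff[THEN iffD2]]) (auto simp: Ind_def)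
  moreover have "{} \<in> Ind" by (simp add: Ind_def)
  ultimately obtain Bs where "Bs \<in> Ind" and maximal: "\<And>X. X \<in> Ind \<Longrightarrow> Bs \<subseteq> X \<Longrightarrow> X = Bs"
    using finite_has_maximal[of Ind] by blast
  then have Bs: "Bs \<subseteq> Cd" "finite Bs" and indep: "\<forall>S\<subseteq>Bs. sum id S = 0 \<longrightarrow> S = {}"
    using fin finite_subset by (auto simp: Ind_def)
  have span: "\<forall>c\<in>Cd. \<exists>S\<subseteq>Bs. c = sum id S"
  proof (rule ccontr)
    assume "\<not> ?thesis"
    then obtain c where c: "c \<in> Cd" "\<forall>S\<subseteq>Bs. c \<noteq> sum id S" by blast
    then have "insert c Bs \<in> Ind"
      using Bs subset_sum_indep_insert[OF Bs(2) indep] by (simp add: Ind_def)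
    then have "c \<in> Bs" using maximal by blast
    then show False using c(2)[rule_format, of "{c}"] by simp
  qed
  have dim: "code_dim Cd (card Bs)" unfolding code_dim_def using Bs indep span by blast
  then have "card Bs = k" using code_dim_imp_card[OF _ zero add] card by simp
  then show ?thesis using dim by simp
qed

lemma card_eq_card_kernel_mult_card_image:
  fixes G :: "'a::ab_group_add set" and F :: "'a \<Rightarrow> 'b::ab_group_add"
  assumes fin: "finite G"
    and add: "\<And>x y. x \<in> G \<Longrightarrow> y \<in> G \<Longrightarrow> x + y \<in> G"
    and diff: "\<And>x y. x \<in> G \<Longrightarrow> y \<in> G \<Longrightarrow> x - y \<in> G"
    and F_add: "\<And>x y. x \<in> G \<Longrightarrow> y \<in> G \<Longrightarrow> F (x + y) = F x + F y"
  shows "card G = card {x\<in>G. F x = 0} * card (F ` G)"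
proof -
  let ?K = "{x\<in>G. F x = 0}"
  have fibre: "card {x\<in>G. F x = F x0} = card ?K" if "x0 \<in> G" for x0
  proof -
    have "F (x - x0) = 0" if "x \<in> G" "F x = F x0" for x
      using F_add[OF diff[OF that(1) \<open>x0 \<in> G\<close>] \<open>x0 \<in> G\<close>] that by simp
    then have "bij_betw (\<lambda>x. x - x0) {x\<in>G. F x = F x0} ?K"
      using that by (intro bij_betw_byWitness[where f'="\<lambda>x. x + x0"]) (auto simp: add diff F_add)
    then show ?thesis by (rule bij_betw_same_card)
  qed
  have "card G = card (\<Union>v\<in>F ` G. {x\<in>G. F x = v})"
    by (rule arg_cong[where f=card]) blast
  also have "\<dots> = (\<Sum>v\<in>F ` G. card {x\<in>G. F x = v})"
    using fin by (intro card_UN_disjoint) auto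
  also have "\<dots> = (\<Sum>v\<in>F ` G. card ?K)"
    by (intro sum.cong) (auto simp: fibre)
  finally show ?thesis by simp
qed

section \<open>Binary words, weights and the sets Delta\<close>

lemma card_words:
  assumes "finite I" shows "card (words I) = 2 ^ card I"
proof -
  have "bij_betw (\<lambda>v. {i. v i \<noteq> 0}) (words I) (Pow I)"
    by (rule bij_betw_byWitness[where f'="\<lambda>S. indicator S"])
      (auto simp: words_def fun_eq_iff indicator_def)
  then show ?thesis using assms by (simp add: bij_betw_same_card card_Pow)
qed

lemma finite_words: "finite I \<Longrightarrow> finite (words I)"
  using card_words by (metis card_ge_0_finite zero_less_numeral zero_less_power)

lemma zero_in_words: "0 \<in> words I"
  by (simp add: words_def)

lemma words_add: "u \<in> words I \<Longrightarrow> v \<in> words I \<Longrightarrow> u + v \<in> words I"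
  by (simp add: words_def)

lemma words_diff: "u \<in> words I \<Longrightarrow> v \<in> words I \<Longrightarrow> u - v \<in> words I"
  by (simp add: words_def)

lemma indicator_in_words: "S \<subseteq> I \<Longrightarrow> (indicator S :: 'i \<Rightarrow> bit) \<in> words I"
  by (auto simp: words_def indicator_def)

lemma words_Un_decompose:
  assumes "x \<in> words (P \<union> Q)"
  obtains u v where "u \<in> words P" "v \<in> words Q" "x = u + v"
proof
  show "(\<lambda>i. if i \<in> P then x i else 0) \<in> words P" "(\<lambda>i. if i \<in> P then 0 else x i) \<in> words Q"
    using assms by (auto simp: words_def)
qed (auto simp: fun_eq_iff)

lemma wt_add_le: "finite I \<Longrightarrow> wt I (x + y) \<le> wt I x + wt I y"
  unfolding wt_def
  by (rule order_trans[OF card_mono card_Un_le]) auto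

lemma wt_indicator: "finite I \<Longrightarrow> S \<subseteq> I \<Longrightarrow> wt I (indicator S :: 'i \<Rightarrow> bit) = card S"
  unfolding wt_def by (rule arg_cong[where f=card]) (auto simp: indicator_def)

abbreviation unit_vec :: "nat \<Rightarrow> nat \<Rightarrow> bit" where
  "unit_vec i \<equiv> indicator {i}"

lemma unit_vec_neq_0: "unit_vec i \<noteq> 0"
  by (auto simp: fun_eq_iff indicator_def)

lemma vecs_eq_words: "vecs m = words {1..m}"
  by (auto simp: vecs_def words_def)

lemma Delta_eq_words: "P \<subseteq> {1..m} \<Longrightarrow> Delta m P = words P"
  unfolding Delta_def vecs_def supp_def words_def by (auto; metis atLeastAtMost_iff subsetD zero_neq_one)

lemma Delta_subset_vecs: "Delta m P \<subseteq> vecs m"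
  by (simp add: Delta_def)

lemma card_Delta: "P \<subseteq> {1..m} \<Longrightarrow> card (Delta m P) = 2 ^ card P"
  by (simp add: Delta_eq_words card_words finite_subset)

lemma card_vecs: "card (vecs m) = 2 ^ m"
  by (simp add: vecs_eq_words card_words)

lemma finite_vecs: "finite (vecs m)"
  by (simp add: vecs_eq_words finite_words)

lemma finite_Delta: "finite (Delta m P)"
  using finite_subset[OF Delta_subset_vecs finite_vecs] .

lemma zero_in_Delta: "0 \<in> Delta m P"
  by (simp add: Delta_def vecs_def supp_def)

lemma card_DeltaS: "P \<subseteq> {1..m} \<Longrightarrow> card (DeltaS m P) = 2 ^ card P - 1"
  by (simp add: DeltaS_def card_Delta finite_Delta zero_in_Delta)

lemma card_DeltaC: "P \<subseteq> {1..m} \<Longrightarrow> card (DeltaC m P) = 2 ^ m - 2 ^ card P"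
  by (simp add: DeltaC_def card_Diff_subset Delta_subset_vecs card_Delta card_vecs finite_Delta)

lemma DeltaC_Diff_singleton:
  "j \<in> {1..m} \<Longrightarrow> DeltaC m ({1..m} - {j}) = {w \<in> words {1..m}. w j = 1}"
  by (auto simp: DeltaC_def Delta_def vecs_def supp_def words_def)

lemma Delta_mono: "P \<subseteq> Q \<Longrightarrow> Delta m P \<subseteq> Delta m Q"
  by (auto simp: Delta_def)

lemma Delta_add: "u \<in> Delta m P \<Longrightarrow> v \<in> Delta m P \<Longrightarrow> u + v \<in> Delta m P"
  by (auto simp: Delta_def vecs_def supp_def)

section \<open>The dual code as the kernel of the syndrome map\<close>

abbreviation vecs3 :: "nat \<Rightarrow> col3 set" where
  "vecs3 m \<equiv> vecs m \<times> vecs m \<times> vecs m"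

(* G y for the matrix G whose columns are the elements of N; G is a parity-check matrix of the
   dual code, so the dual code is the kernel of this map. *)
definition syndrome :: "col3 set \<Rightarrow> (col3 \<Rightarrow> bit) \<Rightarrow> col3" where
  "syndrome N y = (\<Sum>c\<in>N. if y c = 0 then 0 else c)"

lemma syndrome_zero [simp]: "syndrome N 0 = 0"
  by (simp add: syndrome_def)

lemma syndrome_add: "syndrome N (y + z) = syndrome N y + syndrome N z"
  unfolding syndrome_def sum.distrib[symmetric]
  by (rule sum.cong[OF refl]) (auto simp: bit_add_eq_0_iff)

lemma syndrome_eq_sum_support: "finite N \<Longrightarrow> syndrome N y = sum id {c\<in>N. y c \<noteq> 0}"
  unfolding syndrome_def by (simp add: sum.inter_filter) (intro sum.cong; simp)

lemma syndrome_indicator: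
  assumes "finite N" "S \<subseteq> N" shows "syndrome N (indicator S) = sum id S"
proof -
  have "{c\<in>N. (indicator S c :: bit) \<noteq> 0} = S" using assms(2) by (auto simp: indicator_def)
  then show ?thesis by (simp add: syndrome_eq_sum_support assms(1))
qed

lemma ip3_add_right: "ip3 m x (c + d) = ip3 m x c + ip3 m x d"
  unfolding ip3_def by (simp add: distrib_left sum.distrib[symmetric] ac_simps)

lemma ip3_zero_right [simp]: "ip3 m x 0 = 0"
  by (simp add: ip3_def)

lemma ip3_sum_right: "finite S \<Longrightarrow> ip3 m x (sum f S) = (\<Sum>c\<in>S. ip3 m x (f c))"
  by (induct S rule: finite_induct) (simp_all add: ip3_add_right)

lemma sum_indicator_singleton_mult:
  "i \<in> I \<Longrightarrow> finite I \<Longrightarrow> (\<Sum>k\<in>I. (indicator {i} k :: bit) * f k) = f i"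
  by (simp add: indicator_def if_distrib sum.delta cong: if_cong)

lemma ip3_nondegenerate:
  assumes v: "v \<in> vecs3 m" and orth: "\<forall>x\<in>vecs3 m. ip3 m x v = 0"
  shows "v = 0"
proof -
  obtain a b c where abc: "v = (a, b, c)" by (cases v)
  have "a i = 0 \<and> b i = 0 \<and> c i = 0" for i
  proof (cases "i \<in> {1..m}")
    case True
    then have e: "indicator {i} \<in> vecs m" "(0::nat \<Rightarrow> bit) \<in> vecs m"
      by (simp_all add: vecs_eq_words indicator_in_words zero_in_words)
    have "ip3 m (indicator {i}, 0, 0) v = a i" "ip3 m (0, indicator {i}, 0) v = b i"
      "ip3 m (0, 0, indicator {i}) v = c i"
      using True by (simp_all add: ip3_def abc sum_indicator_singleton_mult)
    then show ?thesis using orth e by (metis mem_Times_iff fst_conv snd_conv)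
  next
    case False
    then show ?thesis using v abc by (simp add: vecs_eq_words words_def)
  qed
  then show ?thesis using abc by (simp add: fun_eq_iff zero_prod_def)
qed

lemma dual_code_eq_syndrome_kernel:
  assumes fin: "finite N" and N_vecs: "N \<subseteq> vecs3 m"
  shows "dual_code N (col_code m N) = {y \<in> words N. syndrome N y = 0}"
proof -
  have ip_syndrome: "(\<Sum>c\<in>N. y c * ip3 m x c) = ip3 m x (syndrome N y)" for x y
  proof -
    have "(\<Sum>c\<in>N. y c * ip3 m x c) = (\<Sum>c\<in>N. ip3 m x (if y c = 0 then 0 else c))"
      by (rule sum.cong[OF refl]) auto
    also have "\<dots> = ip3 m x (syndrome N y)"
      by (simp add: syndrome_def ip3_sum_right[OF fin])
    finally show ?thesis .
  qed
  have syndrome_vecs: "syndrome N y \<in> vecs3 m" for y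
    unfolding syndrome_def using N_vecs
    by (intro sum_mem_add_closed[OF fin]) (auto simp: vecs_eq_words zero_in_words words_add zero_prod_def)
  have "(\<forall>c\<in>col_code m N. (\<Sum>j\<in>N. y j * c j) = 0) \<longleftrightarrow> (\<forall>x\<in>vecs3 m. ip3 m x (syndrome N y) = 0)"
    for y
  proof
    assume orth: "\<forall>c\<in>col_code m N. (\<Sum>j\<in>N. y j * c j) = 0"
    show "\<forall>x\<in>vecs3 m. ip3 m x (syndrome N y) = 0"
    proof
      fix x assume "x \<in> vecs3 m"
      then have "(\<lambda>c. if c \<in> N then ip3 m x c else 0) \<in> col_code m N"
        unfolding col_code_def by blast
      with orth have "(\<Sum>j\<in>N. y j * ip3 m x j) = 0" by fastforce
      then show "ip3 m x (syndrome N y) = 0" by (simp only: ip_syndrome)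
    qed
  qed (auto simp: col_code_def ip_syndrome)
  then show ?thesis
    using ip3_nondegenerate[OF syndrome_vecs] by (auto simp: dual_code_def)
qed

lemma syndrome_kernel_code_dim:
  assumes fin: "finite N" and card_image: "card (syndrome N ` words N) = 2 ^ r"
  shows "r \<le> card N" and "code_dim {y \<in> words N. syndrome N y = 0} (card N - r)"
proof -
  let ?K = "{y \<in> words N. syndrome N y = 0}"
  have "card (words N) = card ?K * card (syndrome N ` words N)"
    using fin by (intro card_eq_card_kernel_mult_card_image)
      (simp_all add: finite_words words_add words_diff syndrome_add)
  then have count: "2 ^ card N = card ?K * 2 ^ r"
    using card_words[OF fin] card_image by simp
  have "card ?K \<noteq> 0"
    using count by (intro notI) simp
  then have "2 ^ r \<le> (2::nat) ^ card N"
    unfolding count by (simp add: Suc_le_eq)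
  then show le: "r \<le> card N" by simp
  have "card ?K * 2 ^ r = 2 ^ (card N - r) * (2::nat) ^ r"
    using count le by (simp flip: power_add)
  then have "card ?K = 2 ^ (card N - r)" by simp
  then show "code_dim ?K (card N - r)"
    by (intro code_dimI_card) (auto simp: fin finite_words zero_in_words words_add syndrome_add)
qed

lemma syndrome_kernel_wt_ge_4:
  assumes fin: "finite N" and affine: "\<And>c. c \<in> N \<Longrightarrow> fst (snd c) j = 1"
    and y: "y \<in> words N" "syndrome N y = 0" "y \<noteq> 0"
  shows "4 \<le> wt N y"
proof -
  define S where "S = {c\<in>N. y c \<noteq> 0}"
  have sum_S: "sum id S = 0" using y fin by (simp add: S_def syndrome_eq_sum_support)
  obtain c where "y c \<noteq> 0" using y(3) by (auto simp: fun_eq_iff)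
  then have "c \<in> S" using y(1) unfolding S_def words_def by blast
  then have "S \<noteq> {}" by blast
  then have "card S \<noteq> 0" using fin by (simp add: S_def)
  \<comment> \<open>every column has middle entry 1 at j, so the support of y has even size\<close>
  have "(of_nat (card S) :: bit) = fst (snd (sum id S)) j"
    by (simp add: fst_sum snd_sum sum_fun_apply affine S_def)
  then have "even (card S)" using sum_S by (simp add: of_nat_bit_eq_0_iff zero_prod_def)
  moreover have "card S \<noteq> 2"
  proof
    assume "card S = 2"
    then obtain c d where "S = {c, d}" "c \<noteq> d" by (meson card_2_iff)
    then show False using sum_S by (simp add: col3_add_eq_0_iff)
  qed
  ultimately have "4 \<le> card S" using \<open>card S \<noteq> 0\<close> by presburger
  then show ?thesis by (simp add: wt_def S_def)
qed

section \<open>The column set N4\<close>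

definition N4_param :: "(nat \<Rightarrow> bit) \<times> (nat \<Rightarrow> bit) \<times> (nat \<Rightarrow> bit) \<times> bool \<Rightarrow> col3" where
  "N4_param = (\<lambda>(w1, w2, w3, \<beta>). (w2 + (if \<beta> then w1 else 0), w3, w1))"

lemma N4_eq_image: "N4 m A B C = N4_param ` (DeltaS m A \<times> Delta m B \<times> DeltaC m C \<times> UNIV)"
proof (intro set_eqI iffI)
  fix x assume "x \<in> N4 m A B C"
  then obtain w1 w2 w3 \<omega> where x: "x = (w2 + \<omega>, w3, w1)" "w1 \<in> DeltaS m A" "w2 \<in> Delta m B"
    "w3 \<in> DeltaC m C" "\<omega> \<in> {0, w1}"
    unfolding N4_def by blast
  then have "x = N4_param (w1, w2, w3, \<omega> = w1)" by (auto simp: N4_param_def)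
  then show "x \<in> N4_param ` (DeltaS m A \<times> Delta m B \<times> DeltaC m C \<times> UNIV)" using x by blast
next
  fix x assume "x \<in> N4_param ` (DeltaS m A \<times> Delta m B \<times> DeltaC m C \<times> UNIV)"
  then obtain w1 w2 w3 \<beta> where x: "x = (w2 + (if \<beta> then w1 else 0), w3, w1)" "w1 \<in> DeltaS m A"
    "w2 \<in> Delta m B" "w3 \<in> DeltaC m C"
    by (auto simp: N4_param_def)
  then show "x \<in> N4 m A B C" unfolding N4_def
    by (intro CollectI exI[of _ w1] exI[of _ w2] exI[of _ w3] exI[of _ "if \<beta> then w1 else 0"]) auto
qed

lemma N4_memI:
  assumes "w1 \<in> DeltaS m A" "w2 \<in> Delta m B" "w3 \<in> DeltaC m C"
  shows "(w2, w3, w1) \<in> N4 m A B C" and "(w2 + w1, w3, w1) \<in> N4 m A B C"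
  unfolding N4_eq_image
  by (rule image_eqI[where x="(w1, w2, w3, False)"], simp add: N4_param_def, simp add: assms)
     (rule image_eqI[where x="(w1, w2, w3, True)"], simp add: N4_param_def, simp add: assms)

lemma N4_subset: "N4 m A B C \<subseteq> Delta m (A \<union> B) \<times> DeltaC m C \<times> DeltaS m A"
proof
  fix c assume "c \<in> N4 m A B C"
  then obtain w1 w2 w3 \<omega> where c: "c = (w2 + \<omega>, w3, w1)" "w1 \<in> DeltaS m A" "w2 \<in> Delta m B"
    "w3 \<in> DeltaC m C" "\<omega> \<in> {0, w1}"
    unfolding N4_def by blast
  have "w2 \<in> Delta m (A \<union> B)" "\<omega> \<in> Delta m (A \<union> B)"
    using c Delta_mono[of B "A \<union> B" m] Delta_mono[of A "A \<union> B" m] zero_in_Delta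
    by (auto simp: DeltaS_def)
  then show "c \<in> Delta m (A \<union> B) \<times> DeltaC m C \<times> DeltaS m A" using c by (simp add: Delta_add)
qed

lemma finite_N4: "finite (N4 m A B C)"
  unfolding N4_eq_image
  by (intro finite_imageI finite_cartesian_product) (simp_all add: DeltaS_def DeltaC_def finite_Delta finite_vecs)

lemma inj_on_N4_param:
  assumes "A \<inter> B = {}"
  shows "inj_on N4_param (DeltaS m A \<times> Delta m B \<times> X \<times> UNIV)"
proof (rule inj_onI)
  fix x y assume x: "x \<in> DeltaS m A \<times> Delta m B \<times> X \<times> UNIV"
    and y: "y \<in> DeltaS m A \<times> Delta m B \<times> X \<times> UNIV" and eq: "N4_param x = N4_param y"
  obtain w1 w2 w3 \<beta> where xx: "x = (w1, w2, w3, \<beta>)" by (cases x)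
  obtain v1 v2 v3 \<gamma> where yy: "y = (v1, v2, v3, \<gamma>)" by (cases y)
  have same: "w1 = v1" "w3 = v3" and first: "w2 + (if \<beta> then w1 else 0) = v2 + (if \<gamma> then w1 else 0)"
    using eq by (auto simp: xx yy N4_param_def)
  obtain i where i: "w1 i \<noteq> 0" using x xx by (auto simp: DeltaS_def fun_eq_iff)
  then have "i \<in> A" using x xx by (auto simp: DeltaS_def Delta_def supp_def)
  then have "w2 i = 0" "v2 i = 0" using x y xx yy assms by (auto simp: Delta_def supp_def)
  then have "\<beta> = \<gamma>" using fun_cong[OF first, of i] i by (auto split: if_splits)
  then have "w2 = v2" using first by simp
  then show "x = y" using xx yy same \<open>\<beta> = \<gamma>\<close> by simp
qed

locale N4_setting =
  fixes m j :: nat and A B C :: "nat set"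
  assumes j_mem: "j \<in> {1..m}" and C_eq: "C = {1..m} - {j}" and two_le_m: "2 \<le> m"
    and A_sub: "A \<subseteq> {1..m}" and B_sub: "B \<subseteq> {1..m}" and disjoint: "A \<inter> B = {}"
    and two_le_card_A: "2 \<le> card A"
begin

abbreviation N :: "col3 set" where "N \<equiv> N4 m A B C"

lemma Delta_simps [simp]:
  "Delta m A = words A" "Delta m B = words B" "Delta m (A \<union> B) = words (A \<union> B)"
  "DeltaS m A = words A - {0}" "vecs m = words {1..m}"
  using A_sub B_sub by (simp_all add: Delta_eq_words DeltaS_def vecs_eq_words)

lemma DeltaC_C [simp]: "DeltaC m C = {w \<in> words {1..m}. w j = 1}"
  unfolding C_eq by (rule DeltaC_Diff_singleton[OF j_mem])

lemma finite_A: "finite A" and finite_B: "finite B"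
  using A_sub B_sub finite_subset by blast+

lemma card_N4: "card N = 2 ^ (m + card A + card B) - 2 ^ (m + card B)"
proof -
  have card_C: "card C = m - 1" using j_mem by (simp add: C_eq)
  have "card N = card (DeltaS m A \<times> Delta m B \<times> DeltaC m C \<times> (UNIV :: bool set))"
    unfolding N4_eq_image by (rule card_image[OF inj_on_N4_param[OF disjoint]])
  also have "\<dots> = (2 ^ card A - 1) * 2 ^ card B * (2 ^ m - 2 ^ (m - 1)) * 2"
    using A_sub B_sub card_C C_eq
    by (simp add: card_cartesian_product card_DeltaS card_Delta card_DeltaC del: Delta_simps)
  also have "\<dots> = (2 ^ card A - 1) * 2 ^ card B * 2 ^ m"
    using two_le_m by (cases m) simp_all
  also have "\<dots> = 2 ^ (m + card A + card B) - 2 ^ (m + card B)"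
    by (simp add: diff_mult_distrib power_add algebra_simps)
  finally show ?thesis .
qed

lemma N4_subset_vecs3: "N \<subseteq> vecs3 m"
  using N4_subset[of m A B C] Delta_subset_vecs[of m "A \<union> B"] Delta_subset_vecs[of m A]
  by (auto simp: DeltaC_def DeltaS_def simp del: Delta_simps)

lemma N4_columns_j: "c \<in> N \<Longrightarrow> fst (snd c) j = 1"
  using N4_subset[of m A B C] by auto

lemma unit_vec_j: "unit_vec j \<in> words {1..m}" "unit_vec j j = 1"
  using j_mem by (simp_all add: indicator_in_words)

lemma obtain_two_in_A:
  obtains a a' where "a \<in> A" "a' \<in> A" "a \<noteq> a'"
  using two_le_card_A card_le_Suc0_iff_eq[OF finite_A] by force

context
  fixes S :: "col3 set"
  assumes S_add: "\<And>x y. x \<in> S \<Longrightarrow> y \<in> S \<Longrightarrow> x + y \<in> S" and N_S: "N \<subseteq> S"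
begin

lemma columns_in_span:
  assumes "w \<in> words A" "w \<noteq> 0" "x \<in> words B" "y \<in> words {1..m}" "y j = 1"
  shows "(x, y, w) \<in> S" "(x + w, y, w) \<in> S"
  using N4_memI[of w m A x B y C] assms N_S by auto

lemma span_middle:
  assumes z: "z \<in> words {1..m}" shows "(0, z, 0) \<in> S"
proof -
  obtain a a' where a: "a \<in> A" "a' \<in> A" "a \<noteq> a'" by (rule obtain_two_in_A)
  have ab: "unit_vec a + unit_vec a' \<noteq> 0"
    using a(3) by (auto simp: fun_eq_iff indicator_def)
  have odd: "(0, y, 0) \<in> S" if "y \<in> words {1..m}" "y j = 1" for y
  proof -
    have "(0, y, unit_vec a) + (0, unit_vec j, unit_vec a') + (0, unit_vec j, unit_vec a + unit_vec a') \<in> S"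
      using a ab that unit_vec_j
      by (intro S_add columns_in_span) (auto simp: zero_in_words indicator_in_words words_add unit_vec_neq_0)
    then show ?thesis by (simp add: ac_simps)
  qed
  show ?thesis
  proof (cases "z j = 1")
    case True
    then show ?thesis using odd z by blast
  next
    case False
    have "(0, z + unit_vec j, 0) + (0, unit_vec j, 0) \<in> S"
      using False z unit_vec_j by (intro S_add odd) (auto simp: words_add)
    then show ?thesis by (simp add: ac_simps)
  qed
qed

lemma zero_in_span: "0 \<in> S"
  using span_middle[of 0] by (simp add: zero_in_words zero_prod_def)

lemma span_last: "w \<in> words A \<Longrightarrow> (0, 0, w) \<in> S"
proof (cases "w = 0")
  case True
  then show ?thesis using zero_in_span by (simp add: zero_prod_def)
next
  case False
  assume "w \<in> words A"
  have "(0, unit_vec j, w) + (0, unit_vec j, 0) \<in> S"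
    using False \<open>w \<in> words A\<close> j_mem
    by (intro S_add columns_in_span span_middle unit_vec_j) (auto simp: zero_in_words)
  then show ?thesis by simp
qed

lemma span_first_B: "x \<in> words B \<Longrightarrow> (x, 0, 0) \<in> S"
proof -
  assume x: "x \<in> words B"
  obtain a where a: "a \<in> A" using obtain_two_in_A by blast
  have "(x, unit_vec j, unit_vec a) + (0, unit_vec j, unit_vec a) \<in> S"
    using a x unit_vec_j
    by (intro S_add columns_in_span) (auto simp: zero_in_words indicator_in_words unit_vec_neq_0)
  then show ?thesis by simp
qed

lemma span_first_A: "x \<in> words A \<Longrightarrow> (x, 0, 0) \<in> S"
proof (cases "x = 0")
  case True
  then show ?thesis using zero_in_span by (simp add: zero_prod_def)
next
  case False
  assume "x \<in> words A"
  have "(0 + x, unit_vec j, x) + (0, unit_vec j, x) \<in> S"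
    using False \<open>x \<in> words A\<close> unit_vec_j by (intro S_add columns_in_span) (auto simp: zero_in_words)
  then show ?thesis by simp
qed

lemma span_N4: "words (A \<union> B) \<times> words {1..m} \<times> words A \<subseteq> S"
proof clarify
  fix x z w assume "x \<in> words (A \<union> B)" "z \<in> words {1..m}" "w \<in> words A"
  moreover obtain u v where "u \<in> words A" "v \<in> words B" "x = u + v"
    using words_Un_decompose[OF \<open>x \<in> words (A \<union> B)\<close>] .
  ultimately have "(u, 0, 0) + (v, 0, 0) + (0, z, 0) + (0, 0, w) \<in> S"
    by (intro S_add span_first_A span_first_B span_middle span_last)
  then show "(x, z, w) \<in> S" using \<open>x = u + v\<close> by simp
qed

end

lemma syndrome_image_N4: "syndrome N ` words N = words (A \<union> B) \<times> words {1..m} \<times> words A"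
proof
  have "syndrome N y \<in> words (A \<union> B) \<times> words {1..m} \<times> words A" for y
    unfolding syndrome_def using N4_subset[of m A B C]
    by (intro sum_mem_add_closed[OF finite_N4]) (auto simp: zero_prod_def zero_in_words words_add)
  then show "syndrome N ` words N \<subseteq> words (A \<union> B) \<times> words {1..m} \<times> words A" by blast
  have "N \<subseteq> syndrome N ` words N"
  proof
    fix c assume "c \<in> N"
    then have "syndrome N (indicator {c}) = c" by (simp add: syndrome_indicator finite_N4)
    then show "c \<in> syndrome N ` words N"
      using \<open>c \<in> N\<close> by (metis empty_subsetI image_eqI indicator_in_words insert_subset)
  qed
  then show "words (A \<union> B) \<times> words {1..m} \<times> words A \<subseteq> syndrome N ` words N"
    by (intro span_N4) (auto simp: syndrome_add[symmetric] words_add)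
qed

lemma card_syndrome_image_N4: "card (syndrome N ` words N) = 2 ^ (m + 2 * card A + card B)"
  using disjoint finite_A finite_B
  by (simp add: syndrome_image_N4 card_cartesian_product card_words card_Un_disjoint
      flip: power_add)

lemma weight_4_dual_word:
  "\<exists>y \<in> words N. syndrome N y = 0 \<and> y \<noteq> 0 \<and> wt N y = 4"
proof -
  obtain a where a: "a \<in> A" using obtain_two_in_A by blast
  have "\<exists>k\<in>{1..m}. k \<noteq> j"
    using two_le_m by (intro bexI[of _ "if j = 1 then 2 else 1"]) auto
  then obtain k where k: "k \<in> {1..m}" "k \<noteq> j" by blast
  define e :: "nat \<Rightarrow> nat \<Rightarrow> bit" where "e = unit_vec"
  define p q r s :: col3 where "p = (0, e j, e a)" and "q = (0, e j + e k, e a)"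
    and "r = (e a, e j, e a)" and "s = (e a, e j + e k, e a)"
  have "e j + e k \<in> words {1..m}" "(e j + e k) j = 1" "e a \<in> words A" "e a \<noteq> 0"
    using k a unit_vec_j by (auto simp: e_def words_add indicator_in_words unit_vec_neq_0)
  then have cols: "{p, q, r, s} \<subseteq> N"
    using N4_memI[of "e a" m A 0 B _ C] unit_vec_j
    by (simp add: p_def q_def r_def s_def e_def zero_in_words)
  have "e j \<noteq> e j + e k" "(0::nat \<Rightarrow> bit) \<noteq> e a"
    using k(2) unit_vec_neq_0[of a] by (auto simp: e_def fun_eq_iff indicator_def)
  then have distinct: "p \<noteq> q" "p \<noteq> r" "p \<noteq> s" "q \<noteq> r" "q \<noteq> s" "r \<noteq> s"
    by (simp_all add: p_def q_def r_def s_def)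
  then have card4: "card {p, q, r, s} = 4" by simp
  have "sum id {p, q, r, s} = p + (q + (r + s))"
    using distinct by simp
  also have "\<dots> = 0" by (simp add: p_def q_def r_def s_def zero_prod_def ac_simps)
  finally have "syndrome N (indicator {p, q, r, s}) = 0"
    using cols by (simp add: syndrome_indicator finite_N4)
  moreover have "indicator {p, q, r, s} \<noteq> (0 :: col3 \<Rightarrow> bit)"
  proof
    assume "indicator {p, q, r, s} = (0 :: col3 \<Rightarrow> bit)"
    then have "(indicator {p, q, r, s} :: col3 \<Rightarrow> bit) p = 0" by simp
    then show False by (simp add: indicator_def)
  qed
  ultimately show ?thesis
    using cols card4 by (intro bexI[of _ "indicator {p, q, r, s}"])
      (simp_all add: wt_indicator finite_N4 indicator_in_words)
qed

theorem dual_N4_is_code_nkd: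
  defines "r \<equiv> m + 2 * card A + card B"
  shows "r \<le> card N"
    and "is_code_nkd N (dual_code N (col_code m N)) (card N) (card N - r) 4"
proof -
  let ?K = "{y \<in> words N. syndrome N y = 0}"
  have dual: "dual_code N (col_code m N) = ?K"
    by (rule dual_code_eq_syndrome_kernel[OF finite_N4 N4_subset_vecs3])
  show "r \<le> card N"
    unfolding r_def by (rule syndrome_kernel_code_dim(1)[OF finite_N4 card_syndrome_image_N4])
  have dim: "code_dim ?K (card N - r)"
    unfolding r_def by (rule syndrome_kernel_code_dim(2)[OF finite_N4 card_syndrome_image_N4])
  have "min_dist N ?K 4"
    using weight_4_dual_word syndrome_kernel_wt_ge_4[OF finite_N4 N4_columns_j]
    by (auto simp: min_dist_def)
  then show "is_code_nkd N (dual_code N (col_code m N)) (card N) (card N - r) 4"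
    unfolding dual is_code_nkd_def bin_linear_code_def
    using dim by (auto simp: finite_N4 zero_in_words words_add syndrome_add)
qed

end

section \<open>Distance optimality\<close>

(* Sphere packing: the translates w + Cd, for w in W, are pairwise disjoint. *)
lemma card_mult_card_le_if_pairwise_close:
  fixes W Cd :: "('i \<Rightarrow> bit) set"
  assumes fin: "finite I" and W: "W \<subseteq> words I" and Cd: "Cd \<subseteq> words I"
    and Cd_add: "\<And>x y. x \<in> Cd \<Longrightarrow> y \<in> Cd \<Longrightarrow> x + y \<in> Cd"
    and Cd_wt: "\<And>c. c \<in> Cd \<Longrightarrow> c \<noteq> 0 \<Longrightarrow> d \<le> wt I c"
    and W_close: "\<And>w w'. w \<in> W \<Longrightarrow> w' \<in> W \<Longrightarrow> w \<noteq> w' \<Longrightarrow> wt I (w + w') < d"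
  shows "card W * card Cd \<le> 2 ^ card I"
proof -
  have "inj_on (\<lambda>(w, c). w + c) (W \<times> Cd)"
  proof (rule inj_onI, clarify)
    fix w c w' c' assume w: "w \<in> W" "w' \<in> W" and c: "c \<in> Cd" "c' \<in> Cd" and eq: "w + c = w' + c'"
    from eq have "w + c + (w' + c) = w' + c' + (w' + c)" by simp
    then have sum_eq: "w + w' = c + c'" by (simp add: ac_simps)
    have "w = w'"
    proof (rule ccontr)
      assume "w \<noteq> w'"
      then have "c + c' \<noteq> 0" using sum_eq by (metis bit_fun_add_eq_0_iff)
      then show False
        using Cd_wt[OF Cd_add[OF c]] W_close[OF w \<open>w \<noteq> w'\<close>] sum_eq by simp
    qed
    then show "w = w' \<and> c = c'" using eq by simp
  qed
  moreover have "(\<lambda>(w, c). w + c) ` (W \<times> Cd) \<subseteq> words I"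
    using W Cd by (auto intro: words_add)
  ultimately have "card (W \<times> Cd) \<le> card (words I)"
    using card_inj_on_le finite_words[OF fin] by blast
  then show ?thesis by (simp add: card_cartesian_product card_words fin)
qed

lemma distance_optimal_4I:
  assumes "h \<le> n" "k \<le> n" and small: "2 ^ (n - k) < h * (n - h)"
  shows "distance_optimal n k 4"
  unfolding distance_optimal_def
proof
  assume "\<exists>Cd :: (nat \<Rightarrow> bit) set. is_code_nkd {..<n} Cd n k (4 + 1)"
  then obtain Cd :: "(nat \<Rightarrow> bit) set" where "is_code_nkd {..<n} Cd n k 5" by auto
  then have Cd: "Cd \<subseteq> words {..<n}" "0 \<in> Cd"
    "\<And>x y. x \<in> Cd \<Longrightarrow> y \<in> Cd \<Longrightarrow> x + y \<in> Cd" "code_dim Cd k"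
    "\<And>c. c \<in> Cd \<Longrightarrow> c \<noteq> 0 \<Longrightarrow> 5 \<le> wt {..<n} c"
    unfolding is_code_nkd_def bin_linear_code_def min_dist_def by blast+
  define pair :: "nat \<times> nat \<Rightarrow> nat \<Rightarrow> bit" where "pair = (\<lambda>(i, l). indicator {i, l})"
  define W where "W = pair ` ({..<h} \<times> {h..<n})"
  have "inj_on pair ({..<h} \<times> {h..<n})"
  proof (rule inj_onI)
    fix x y assume x: "x \<in> {..<h} \<times> {h..<n}" and y: "y \<in> {..<h} \<times> {h..<n}"
      and eq: "pair x = pair y"
    have "z \<in> {fst x, snd x} \<longleftrightarrow> z \<in> {fst y, snd y}" for z
      using fun_cong[OF eq, of z] by (cases x; cases y) (simp add: pair_def indicator_def of_bool_eq_iff)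
    then have "{fst x, snd x} = {fst y, snd y}" by blast
    then show "x = y" using x y by (cases x; cases y) (auto simp: doubleton_eq_iff)
  qed
  then have card_W: "card W = h * (n - h)" by (simp add: W_def card_image card_cartesian_product)
  have W_words: "W \<subseteq> words {..<n}"
    using assms(1) by (auto simp: W_def pair_def intro!: indicator_in_words)
  have wt_W: "wt {..<n} w \<le> 2" if "w \<in> W" for w
  proof -
    obtain i l where "i < h" "l < n" "w = indicator {i, l}"
      using \<open>w \<in> W\<close> by (auto simp: W_def pair_def)
    then have "wt {..<n} w = card {i, l}" using assms(1) by (simp add: wt_indicator)
    then show ?thesis by (simp add: card_insert_if)
  qed
  have "wt {..<n} (w + w') < 5" if "w \<in> W" "w' \<in> W" for w w'
    using wt_add_le[of "{..<n}" w w'] wt_W[OF that(1)] wt_W[OF that(2)] by simp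
  then have "card W * card Cd \<le> 2 ^ n"
    using card_mult_card_le_if_pairwise_close[OF _ W_words Cd(1,3,5)] by simp
  also have "\<dots> = 2 ^ (n - k) * 2 ^ k"
    using assms(2) by (simp flip: power_add)
  finally have "h * (n - h) \<le> 2 ^ (n - k)"
    using code_dim_imp_card[OF Cd(4,2,3)] card_W by simp
  then show False using small by simp
qed

lemma pow_lt_half_mult_half:
  fixes s a :: nat
  assumes "3 \<le> s" "2 \<le> a"
  defines "n \<equiv> 2 ^ (s + a) - 2 ^ s"
  shows "(2::nat) ^ (s + 2 * a) < n div 2 * (n - n div 2)"
proof -
  define u t :: nat where "u = 2 ^ (s - 2)" and "t = 2 ^ a - 1"
  have "2 ^ 1 \<le> u" unfolding u_def using assms(1) by (intro power_increasing) auto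
  have "2 ^ 2 \<le> (2::nat) ^ a" using assms(2) by (intro power_increasing) auto
  then have two_a: "2 ^ a = t + 1" and "3 \<le> t" by (auto simp: t_def)
  have "s = (s - 2) + 2" using assms(1) by simp
  then have "(2::nat) ^ s = 2 ^ (s - 2) * 2 ^ 2" by (metis power_add)
  then have two_s: "(2::nat) ^ s = 4 * u" by (simp add: u_def)
  have n: "n = 4 * u * t" by (simp add: n_def power_add two_s two_a algebra_simps)
  have "3 * t \<le> t * t" using \<open>3 \<le> t\<close> by (rule mult_right_mono) simp
  moreover have "(t + 1) * (t + 1) = t * t + 2 * t + 1" by (simp add: algebra_simps)
  ultimately have "(t + 1) * (t + 1) < 2 * (t * t)" using \<open>3 \<le> t\<close> by linarith
  also have "\<dots> \<le> u * (t * t)" using \<open>2 ^ 1 \<le> u\<close> by simp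
  finally have "4 * u * ((t + 1) * (t + 1)) < 4 * u * (u * (t * t))"
    using \<open>2 ^ 1 \<le> u\<close> by (intro mult_strict_left_mono) auto
  moreover have "2 ^ (s + 2 * a) = 4 * u * ((t + 1) * (t + 1))"
    by (simp add: power_add mult_2 two_s two_a)
  ultimately show ?thesis by (simp add: n algebra_simps)
qed

lemma obtain_remove_of_card_pred:
  assumes "finite X" "X \<noteq> {}" "C \<subseteq> X" "card C = card X - 1"
  obtains x where "x \<in> X" "C = X - {x}"
proof -
  have "card X \<noteq> 0" using assms(1,2) by simp
  have "card (X - C) = card X - card C"
    using assms by (simp add: card_Diff_subset finite_subset)
  also have "\<dots> = 1" using \<open>card X \<noteq> 0\<close> assms(4) by arith
  finally have "card (X - C) = 1" .
  then obtain x where "X - C = {x}" by (rule card_1_singletonE)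
  then show ?thesis using that assms(3) by blast
qed

theorem mainTheorem16:
  fixes m :: nat and A B C :: "nat set"
  assumes "m \<ge> 2"
    and "A \<noteq> {}" "A \<subseteq> {1..m}" "B \<noteq> {}" "B \<subseteq> {1..m}" "C \<noteq> {}" "C \<subseteq> {1..m}"
    and "A \<inter> B = {}" and "card C = m - 1" and "card A \<ge> 2"
  shows "is_code_nkd (N4 m A B C) (dual_code (N4 m A B C) (col_code m (N4 m A B C)))
           (2 ^ (m + card A + card B) - 2 ^ (m + card B))
           (2 ^ (m + card A + card B) - 2 ^ (m + card B) - m - 2 * card A - card B) 4
       \<and> distance_optimal (2 ^ (m + card A + card B) - 2 ^ (m + card B))
           (2 ^ (m + card A + card B) - 2 ^ (m + card B) - m - 2 * card A - card B) 4"
proof -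
  obtain j where j: "j \<in> {1..m}" "C = {1..m} - {j}"
    using obtain_remove_of_card_pred[of "{1..m}" C] assms(1,7,9) by auto
  interpret N4_setting m j A B C
    using assms j by unfold_locales auto
  define n r where "n = 2 ^ (m + card A + card B) - (2::nat) ^ (m + card B)"
    and "r = m + 2 * card A + card B"
  have code: "is_code_nkd N (dual_code N (col_code m N)) n (n - r) 4" and "r \<le> n"
    using dual_N4_is_code_nkd by (simp_all add: card_N4 n_def r_def)
  have "card B \<noteq> 0" using assms(4) finite_B by simp
  then have "2 ^ r < n div 2 * (n - n div 2)"
    using pow_lt_half_mult_half[of "m + card B" "card A"] assms(1,10)
    by (simp add: n_def r_def ac_simps)
  then have "distance_optimal n (n - r) 4"
    using \<open>r \<le> n\<close> by (intro distance_optimal_4I[of "n div 2"]) simp_all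
  moreover have "n - m - 2 * card A - card B = n - r" by (simp add: r_def)
  ultimately show ?thesis using code unfolding n_def[symmetric] by simp
qed

end
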